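(* Let $\Lambda$ be a lattice of rank $k\le 3$ with a positive definite quadratic form. If a list of $k$ vectors attains the successive minima of $\Lambda$, then these vectors form a basis of $\Lambda$. The same holds for $k=4$ if additionally $\Lambda$ is an order in $B_p$ (with quadratic form the reduced norm), where $p$ is an odd prime and $B_p$ is the quaternion algebra over $\mathbb{Q}$ ramified exactly at $p$ and $\infty$.
   Context: For a lattice $\Lambda$ of rank $k$ with positive definite quadratic form $Q$ and $1\le i\le k$, the $i$-th successive minimum is the minimum value $D_i$ such that the $\mathbb{Z}$-module generated by $\{v\in\Lambda:Q(v)\le D_i\}$ has rank at least $i$. An ordered list $v_1,\dots,v_k\in\Lambda$ attains the successive minima if it is linearly independent and $Q(v_i)=D_i$ for each $i$. *)

theory Defs
  imports "HOL-Analysis.Analysis" "HOL-Number_Theory.Number_Theory"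
begin

definition zspan :: "'v::real_vector set \<Rightarrow> 'v set" where
  "zspan S = {(\<Sum>x\<in>F. real_of_int (c x) *\<^sub>R x) | F c. finite F \<and> F \<subseteq> S}"

definition zindep :: "nat \<Rightarrow> (nat \<Rightarrow> 'v::real_vector) \<Rightarrow> bool" where
  "zindep k v \<longleftrightarrow> (\<forall>c::nat \<Rightarrow> int. (\<Sum>i<k. real_of_int (c i) *\<^sub>R v i) = 0 \<longrightarrow> (\<forall>i<k. c i = 0))"

definition rindep :: "nat \<Rightarrow> (nat \<Rightarrow> 'v::real_vector) \<Rightarrow> bool" where
  "rindep k b \<longleftrightarrow> (\<forall>c::nat \<Rightarrow> real. (\<Sum>i<k. c i *\<^sub>R b i) = 0 \<longrightarrow> (\<forall>i<k. c i = 0))"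

definition lattice_rank :: "'v::real_vector set \<Rightarrow> nat \<Rightarrow> bool" where
  "lattice_rank L k \<longleftrightarrow> (\<exists>b. rindep k b \<and> L = {(\<Sum>i<k. real_of_int (c i) *\<^sub>R b i) | c. True})"

definition pos_def_qf :: "'v::real_vector set \<Rightarrow> ('v \<Rightarrow> real) \<Rightarrow> bool" where
  "pos_def_qf L Q \<longleftrightarrow> (\<exists>\<beta>. bilinear \<beta> \<and> (\<forall>x. Q x = \<beta> x x))
      \<and> (\<forall>x\<in>span L. x \<noteq> 0 \<longrightarrow> Q x > 0)"

definition zrank_ge :: "'v::real_vector set \<Rightarrow> nat \<Rightarrow> bool" where
  "zrank_ge S i \<longleftrightarrow> (\<exists>w. (\<forall>j<i. w j \<in> zspan S) \<and> zindep i w)"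

definition is_succ_min :: "'v::real_vector set \<Rightarrow> ('v \<Rightarrow> real) \<Rightarrow> nat \<Rightarrow> real \<Rightarrow> bool" where
  "is_succ_min L Q i D \<longleftrightarrow> zrank_ge {x\<in>L. Q x \<le> D} i
      \<and> (\<forall>D'. zrank_ge {x\<in>L. Q x \<le> D'} i \<longrightarrow> D \<le> D')"

text \<open>The list v 0, ..., v (k-1) (i.e. v_1..v_k) attains the successive minima.\<close>
definition attains_succ_min :: "'v::real_vector set \<Rightarrow> ('v \<Rightarrow> real) \<Rightarrow> nat \<Rightarrow> (nat \<Rightarrow> 'v) \<Rightarrow> bool" where
  "attains_succ_min L Q k v \<longleftrightarrow> (\<forall>i<k. v i \<in> L) \<and> zindep k v
      \<and> (\<forall>i<k. is_succ_min L Q (Suc i) (Q (v i)))"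

definition is_basis_of :: "'v::real_vector set \<Rightarrow> nat \<Rightarrow> (nat \<Rightarrow> 'v) \<Rightarrow> bool" where
  "is_basis_of L k v \<longleftrightarrow> (\<forall>i<k. v i \<in> L) \<and> zindep k v
      \<and> L = {(\<Sum>i<k. real_of_int (c i) *\<^sub>R v i) | c. True}"

text \<open>Elements x = x1 + x2 i + x3 j + x4 k with i^2 = a, j^2 = b, k = ij = -ji,
  represented by their coordinates in real^4; the algebra over Q consists of the
  vectors with rational coordinates.\<close>

definition qmul :: "int \<Rightarrow> int \<Rightarrow> real^4 \<Rightarrow> real^4 \<Rightarrow> real^4" where
  "qmul a b x y = (\<chi> n.
     if n = 1 then x$1*y$1 + a*x$2*y$2 + b*x$3*y$3 - a*b*x$4*y$4
     else if n = 2 then x$1*y$2 + x$2*y$1 - b*x$3*y$4 + b*x$4*y$3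
     else if n = 3 then x$1*y$3 + x$3*y$1 + a*x$2*y$4 - a*x$4*y$2
     else x$1*y$4 + x$4*y$1 + x$2*y$3 - x$3*y$2)"

definition qone :: "real^4" where
  "qone = (\<chi> n. if n = 1 then 1 else 0)"

text \<open>Reduced norm x * conj x.\<close>
definition nrd :: "int \<Rightarrow> int \<Rightarrow> real^4 \<Rightarrow> real" where
  "nrd a b x = (x$1)^2 - a*(x$2)^2 - b*(x$3)^2 + a*b*(x$4)^2"

text \<open>(a,b) splits at the prime l: z^2 = a x^2 + b y^2 has a nontrivial l-adic
  solution, equivalently a primitive solution modulo l^n for every n.\<close>
definition splits_at :: "int \<Rightarrow> int \<Rightarrow> int \<Rightarrow> bool" where
  "splits_at a b l \<longleftrightarrow> (\<forall>n::nat. \<exists>x y z::int. \<not> (l dvd x \<and> l dvd y \<and> l dvd z)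
       \<and> [a*x^2 + b*y^2 = z^2] (mod l^n))"

text \<open>(a,b) is ramified exactly at p and infinity (definite, and non-split exactly at p).\<close>
definition ramified_exactly_at :: "int \<Rightarrow> int \<Rightarrow> int \<Rightarrow> bool" where
  "ramified_exactly_at a b p \<longleftrightarrow> a \<noteq> 0 \<and> b \<noteq> 0 \<and> a < 0 \<and> b < 0
     \<and> (\<forall>l. prime l \<longrightarrow> (\<not> splits_at a b l \<longleftrightarrow> l = p))"

definition is_order :: "int \<Rightarrow> int \<Rightarrow> (real^4) set \<Rightarrow> bool" where
  "is_order a b R \<longleftrightarrow> lattice_rank R 4 \<and> (\<forall>x\<in>R. \<forall>n. x$n \<in> \<rat>)
     \<and> qone \<in> R \<and> (\<forall>x\<in>R. \<forall>y\<in>R. qmul a b x y \<in> R)"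

end

theory Submission
  imports Defs
begin

(* Suppose some x in the lattice is not an integer combination of v 0, ..., v (k - 1). Some
   multiple d x is, and reducing its coefficients modulo d gives a lattice vector
   sum (f i) v i with 0 <= f i < 1, not all zero; let j be the last index with f j > 0.
   Rounding the f i one at a time to 0 or 1, each time choosing the better of the two options,
   yields a lattice vector y whose expansion still ends at v j and with
   Q y <= sum_{i <= j} f i (1 - f i) Q (v i) <= (j + 1) / 4 * Q (v j),
   whereas the definition of the successive minima forces Q (v j) <= Q y. Hence j >= 3, which
   is impossible in rank at most 3. In rank 4 the equality case leaves only
   (v 0 + v 1 + v 2 + v 3) / 2 in the lattice with all Q (v i) equal, and comparing the eight
   vectors (+-v 0 +- v 1 +- v 2 + v 3) / 2 with v 3 shows that the v i are pairwise orthogonal.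
   For an order in B_p the reduced norm would then be rationally equivalent to a multiple
   D (x1^2 + x2^2 + x3^2 + x4^2) of the sum of four squares. But B_p splits at 2, so
   z^2 - a x^2 - b y^2 has zeros with an odd coordinate modulo every power of 2, and the
   2-adic descent for sums of four squares shows that no such vector can exist. *)

section \<open>Integer combinations\<close>

definition int_combs :: "nat \<Rightarrow> (nat \<Rightarrow> 'v::real_vector) \<Rightarrow> 'v set" where
  "int_combs k b = {(\<Sum>i<k. real_of_int (c i) *\<^sub>R b i) | c. True}"

lemma int_combsI: "(\<Sum>i<k. real_of_int (c i) *\<^sub>R b i) \<in> int_combs k b"
  unfolding int_combs_def by blast

lemma int_combsE:
  assumes "x \<in> int_combs k b"
  obtains c where "x = (\<Sum>i<k. real_of_int (c i) *\<^sub>R b i)"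
  using assms unfolding int_combs_def by blast

lemma int_combs_coeffs:
  assumes "\<And>i. i \<in> A \<Longrightarrow> w i \<in> int_combs k b"
  obtains e where "\<And>i. i \<in> A \<Longrightarrow> w i = (\<Sum>r<k. real_of_int (e i r) *\<^sub>R b r)"
proof -
  have "\<forall>i\<in>A. \<exists>c. w i = (\<Sum>r<k. real_of_int (c r) *\<^sub>R b r)"
    using assms unfolding int_combs_def by blast
  then obtain e where "\<forall>i\<in>A. w i = (\<Sum>r<k. real_of_int (e i r) *\<^sub>R b r)"
    by (rule bchoice[THEN exE])
  then show ?thesis using that by blast
qed

lemma int_combs_diff:
  assumes "x \<in> int_combs k b" "y \<in> int_combs k b"
  shows "x - y \<in> int_combs k b"
proof -
  obtain c c' where "x = (\<Sum>i<k. real_of_int (c i) *\<^sub>R b i)" "y = (\<Sum>i<k. real_of_int (c' i) *\<^sub>R b i)"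
    using assms unfolding int_combs_def by blast
  then have "x - y = (\<Sum>i<k. real_of_int (c i - c' i) *\<^sub>R b i)"
    by (simp add: sum_subtractf scaleR_diff_left)
  then show ?thesis by (simp only: int_combsI)
qed

lemma int_combs_subset:
  assumes "\<And>i. i < n \<Longrightarrow> w i \<in> int_combs k b"
  shows "int_combs n w \<subseteq> int_combs k b"
proof
  fix x assume "x \<in> int_combs n w"
  then obtain c where x: "x = (\<Sum>i<n. real_of_int (c i) *\<^sub>R w i)" by (rule int_combsE)
  obtain e where e: "\<And>i. i \<in> {..<n} \<Longrightarrow> w i = (\<Sum>r<k. real_of_int (e i r) *\<^sub>R b r)"
    using int_combs_coeffs[of "{..<n}" w k b] assms by blast
  have "x = (\<Sum>i<n. \<Sum>r<k. real_of_int (c i * e i r) *\<^sub>R b r)"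
    unfolding x by (intro sum.cong refl) (simp add: e scaleR_sum_right)
  also have "\<dots> = (\<Sum>r<k. real_of_int (\<Sum>i<n. c i * e i r) *\<^sub>R b r)"
    by (subst sum.swap) (simp add: scaleR_sum_left)
  finally show "x \<in> int_combs k b" by (simp only: int_combsI)
qed

lemma int_relation_exists:
  fixes u :: "'a \<Rightarrow> nat \<Rightarrow> int"
  assumes "finite I" "k < card I"
  shows "\<exists>c. (\<exists>i\<in>I. c i \<noteq> 0) \<and> (\<forall>r<k. (\<Sum>i\<in>I. c i * u i r) = 0)"
  using assms
proof (induction k arbitrary: I u)
  case 0
  then show ?case by (intro exI[of _ "\<lambda>_. 1"]) (auto simp: card_gt_0_iff)
next
  case (Suc k)
  show ?case
  proof (cases "\<exists>j\<in>I. u j k \<noteq> 0")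
    case False
    have "k < card I" using Suc.prems by simp
    with Suc.IH[of I u] Suc.prems obtain c where "\<exists>i\<in>I. c i \<noteq> 0" "\<forall>r<k. (\<Sum>i\<in>I. c i * u i r) = 0"
      by blast
    moreover have "(\<Sum>i\<in>I. c i * u i k) = 0" using False by simp
    ultimately show ?thesis by (metis less_Suc_eq)
  next
    case True
    then obtain j where j: "j \<in> I" "u j k \<noteq> 0" by blast
    \<comment> \<open>Gaussian elimination of the last coordinate with the pivot \<open>u j k\<close>.\<close>
    define u' where "u' = (\<lambda>i r. u j k * u i r - u i k * u j r)"
    have "k < card (I - {j})" using Suc.prems j by simp
    with Suc.IH[of "I - {j}" u'] Suc.prems obtain c where
      c: "\<exists>i\<in>I - {j}. c i \<noteq> 0" "\<forall>r<k. (\<Sum>i\<in>I - {j}. c i * u' i r) = 0"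
      by auto
    define c' where "c' = (\<lambda>i. if i = j then - (\<Sum>l\<in>I - {j}. c l * u l k) else c i * u j k)"
    have eq: "(\<Sum>i\<in>I. c' i * u i r) = (\<Sum>i\<in>I - {j}. c i * u' i r)" for r
    proof -
      have "(\<Sum>i\<in>I. c' i * u i r) = c' j * u j r + (\<Sum>i\<in>I - {j}. c i * u j k * u i r)"
        using Suc.prems j by (simp add: sum.remove[of I j] c'_def)
      then show ?thesis
        by (simp add: c'_def u'_def algebra_simps sum_subtractf sum_distrib_left sum_distrib_right)
    qed
    show ?thesis
    proof (intro exI[of _ c'] conjI allI impI)
      show "\<exists>i\<in>I. c' i \<noteq> 0" using c(1) j by (auto simp: c'_def)
      show "(\<Sum>i\<in>I. c' i * u i r) = 0" if "r < Suc k" for r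
        using c(2) that unfolding eq by (cases "r = k") (simp_all add: u'_def)
    qed
  qed
qed

lemma int_combs_dependent:
  assumes "\<And>i. i \<le> k \<Longrightarrow> w i \<in> int_combs k b"
  shows "\<exists>c. (\<exists>i\<le>k. c i \<noteq> 0) \<and> (\<Sum>i\<le>k. real_of_int (c i) *\<^sub>R w i) = 0"
proof -
  obtain u where u: "\<And>i. i \<in> {..k} \<Longrightarrow> w i = (\<Sum>r<k. real_of_int (u i r) *\<^sub>R b r)"
    using int_combs_coeffs[of "{..k}" w k b] assms by blast
  obtain c where c: "\<exists>i\<le>k. c i \<noteq> 0" "\<forall>r<k. (\<Sum>i\<le>k. c i * u i r) = 0"
    using int_relation_exists[of "{..k}" k u] by auto
  have "(\<Sum>i\<le>k. real_of_int (c i) *\<^sub>R w i) = (\<Sum>i\<le>k. \<Sum>r<k. real_of_int (c i * u i r) *\<^sub>R b r)"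
    by (intro sum.cong refl) (simp add: u scaleR_sum_right)
  also have "\<dots> = (\<Sum>r<k. real_of_int (\<Sum>i\<le>k. c i * u i r) *\<^sub>R b r)"
    by (subst sum.swap) (simp add: scaleR_sum_left)
  also have "\<dots> = 0" using c(2) by simp
  finally show ?thesis using c(1) by blast
qed

lemma zindep_nonzero: "zindep k v \<Longrightarrow> i < k \<Longrightarrow> v i \<noteq> 0"
  unfolding zindep_def
  by (erule allE[of _ "\<lambda>l. if l = i then 1 else 0"])
    (auto simp: if_distrib[of "\<lambda>c. real_of_int c *\<^sub>R _"] cong: if_cong)

lemma zindep_mono:
  assumes "zindep n w" "m \<le> n"
  shows "zindep m w"
  unfolding zindep_def
proof (intro allI impI)
  fix c :: "nat \<Rightarrow> int" and i
  assume c: "(\<Sum>i<m. real_of_int (c i) *\<^sub>R w i) = 0" and "i < m"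
  define c' where "c' = (\<lambda>i. if i < m then c i else 0)"
  have "(\<Sum>i<n. real_of_int (c' i) *\<^sub>R w i) = (\<Sum>i<m. real_of_int (c i) *\<^sub>R w i)"
    using \<open>m \<le> n\<close> by (intro sum.mono_neutral_cong_right) (auto simp: c'_def)
  then have "c' i = 0" using assms c \<open>i < m\<close> unfolding zindep_def by simp
  then show "c i = 0" using \<open>i < m\<close> by (simp add: c'_def)
qed

lemma zindep_replace:
  assumes indep: "zindep k v" and "m \<le> j" "j < k" "d \<noteq> 0"
    and y: "real_of_int d *\<^sub>R y = (\<Sum>i<k. real_of_int (e i) *\<^sub>R v i)"
    and "e j \<noteq> 0" and e_zero: "\<And>i. j < i \<Longrightarrow> i < k \<Longrightarrow> e i = 0"
  shows "zindep (Suc m) (v(m := y))"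
  unfolding zindep_def
proof (intro allI impI)
  fix c :: "nat \<Rightarrow> int" and i
  assume "(\<Sum>i<Suc m. real_of_int (c i) *\<^sub>R (v(m := y)) i) = 0" and "i < Suc m"
  then have rel: "(\<Sum>i<m. real_of_int (c i) *\<^sub>R v i) + real_of_int (c m) *\<^sub>R y = 0"
    by simp
  define g where "g = (\<lambda>i. (if i < m then d * c i else 0) + c m * e i)"
  have "(\<Sum>i<k. real_of_int (g i) *\<^sub>R v i)
      = (\<Sum>i<m. real_of_int (d * c i) *\<^sub>R v i) + real_of_int (c m) *\<^sub>R (real_of_int d *\<^sub>R y)"
  proof -
    have "(\<Sum>i<k. (if i < m then real_of_int (d * c i) *\<^sub>R v i else 0))
        = (\<Sum>i<m. real_of_int (d * c i) *\<^sub>R v i)"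
      using \<open>m \<le> j\<close> \<open>j < k\<close> by (intro sum.mono_neutral_cong_right) auto
    then show ?thesis
      by (simp add: g_def y scaleR_add_left sum.distrib scaleR_sum_right
          if_distrib[of "\<lambda>t. real_of_int t *\<^sub>R _"] cong: if_cong)
  qed
  also have "\<dots> = real_of_int d *\<^sub>R ((\<Sum>i<m. real_of_int (c i) *\<^sub>R v i) + real_of_int (c m) *\<^sub>R y)"
    by (simp add: scaleR_add_right scaleR_sum_right)
  finally have g: "\<And>i. i < k \<Longrightarrow> g i = 0"
    using indep rel unfolding zindep_def by simp
  have "c m = 0" using g[of j] \<open>m \<le> j\<close> \<open>j < k\<close> \<open>e j \<noteq> 0\<close> by (simp add: g_def)
  moreover have "c i = 0" if "i < m"
    using g[of i] that \<open>c m = 0\<close> \<open>m \<le> j\<close> \<open>j < k\<close> \<open>d \<noteq> 0\<close> by (simp add: g_def)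
  ultimately show "c i = 0" using \<open>i < Suc m\<close> less_Suc_eq by blast
qed

lemma zrank_geI: "(\<And>j. j < i \<Longrightarrow> w j \<in> S) \<Longrightarrow> zindep i w \<Longrightarrow> zrank_ge S i"
  unfolding zrank_ge_def zspan_def
  by (rule exI[of _ w]) (force intro!: exI[of _ "\<lambda>_. 1"])

lemma bilinear_convex_identity:
  assumes "bilinear \<beta>"
  shows "(1 - a) * \<beta> (u + a *\<^sub>R w) (u + a *\<^sub>R w) + a * \<beta> (u + (a - 1) *\<^sub>R w) (u + (a - 1) *\<^sub>R w)
    = \<beta> u u + a * (1 - a) * \<beta> w w"
  unfolding bilinear_ladd[OF assms] bilinear_radd[OF assms] bilinear_lmul[OF assms]
    bilinear_rmul[OF assms]
  by (simp add: algebra_simps)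

text \<open>Rounding the coefficients \<open>f i \<in> [0, 1]\<close> one at a time to \<open>0\<close> or \<open>1\<close>: by the identity above,
  one of the two choices increases the form by at most \<open>f i * (1 - f i) * \<beta> (v i) (v i)\<close>.\<close>
lemma bilinear_rounding_le:
  fixes \<beta> :: "'v::real_vector \<Rightarrow> 'v \<Rightarrow> real" and f :: "nat \<Rightarrow> real"
  assumes bil: "bilinear \<beta>" and f: "\<And>i. 0 \<le> f i \<and> f i \<le> 1"
  shows "\<exists>s. (\<forall>i. f i = 0 \<longrightarrow> \<not> s i) \<and>
    \<beta> (\<Sum>i<n. (f i - of_bool (s i)) *\<^sub>R v i) (\<Sum>i<n. (f i - of_bool (s i)) *\<^sub>R v i)
      \<le> (\<Sum>i<n. f i * (1 - f i) * \<beta> (v i) (v i))"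
proof (induction n)
  case 0
  show ?case by (intro exI[of _ "\<lambda>_. False"]) (simp add: bilinear_lzero[OF bil])
next
  case (Suc n)
  then obtain s where s: "\<forall>i. f i = 0 \<longrightarrow> \<not> s i"
    and le: "\<beta> (\<Sum>i<n. (f i - of_bool (s i)) *\<^sub>R v i) (\<Sum>i<n. (f i - of_bool (s i)) *\<^sub>R v i)
      \<le> (\<Sum>i<n. f i * (1 - f i) * \<beta> (v i) (v i))"
    by blast
  define u where "u = (\<Sum>i<n. (f i - of_bool (s i)) *\<^sub>R v i)"
  define a where "a = f n"
  let ?Q = "\<lambda>x. \<beta> x x"
  define t where "t = (a \<noteq> 0 \<and> ?Q (u + (a - 1) *\<^sub>R v n) < ?Q (u + a *\<^sub>R v n))"
  have "0 \<le> a" "a \<le> 1" using f by (auto simp: a_def)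
  let ?X = "?Q (u + a *\<^sub>R v n)" and ?Y = "?Q (u + (a - 1) *\<^sub>R v n)"
  have "min ?X ?Y \<le> (1 - a) * ?X + a * ?Y"
    using mult_left_mono[of "min ?X ?Y" ?X "1 - a"] mult_left_mono[of "min ?X ?Y" ?Y a] \<open>0 \<le> a\<close> \<open>a \<le> 1\<close>
    by (simp add: algebra_simps)
  moreover have "?Q (u + (a - of_bool t) *\<^sub>R v n) = (if a = 0 then ?X else min ?X ?Y)"
    unfolding t_def by (auto simp: min_def)
  ultimately have "?Q (u + (a - of_bool t) *\<^sub>R v n) \<le> (1 - a) * ?X + a * ?Y"
    by auto
  then have step: "?Q (u + (a - of_bool t) *\<^sub>R v n) \<le> ?Q u + a * (1 - a) * ?Q (v n)"
    unfolding bilinear_convex_identity[OF bil] .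
  have "(\<Sum>i<n. (f i - of_bool ((s(n := t)) i)) *\<^sub>R v i) = u"
    unfolding u_def by (intro sum.cong) auto
  then show ?case
    using s step le by (intro exI[of _ "s(n := t)"]) (auto simp: t_def a_def u_def)
qed

section \<open>Successive minima in rank at most four\<close>

lemma sum_lessThan_4: "(\<Sum>i<4. f i) = f 0 + f 1 + f 2 + f (3::nat)"
  by (simp add: numeral_eq_Suc)

lemma less_4_cases: "(i::nat) < 4 \<Longrightarrow> i = 0 \<or> i = 1 \<or> i = 2 \<or> i = 3"
  by auto

lemma le_sum_quarter_weights:
  fixes f q :: "nat \<Rightarrow> real"
  assumes q_bounds: "\<forall>i\<le>j. 0 < q i \<and> q i \<le> q j"
    and le: "q j \<le> (\<Sum>i\<le>j. f i * (1 - f i) * q i)"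
  shows "3 \<le> j" and "j = 3 \<Longrightarrow> i \<le> 3 \<Longrightarrow> f i = 1/2 \<and> q i = q 3"
proof -
  have q: "0 < q i \<and> q i \<le> q j" if "i \<le> j" for i using q_bounds that by blast
  have quarter: "f i * (1 - f i) = 1/4 - (f i - 1/2)^2" for i
    by (simp add: power2_eq_square algebra_simps)
  have term_le: "f i * (1 - f i) * q i \<le> q i / 4" if "i \<le> j" for i
    using q[OF that] mult_right_mono[of "f i * (1 - f i)" "1/4" "q i"] by (auto simp: quarter)
  have term_le_j: "f i * (1 - f i) * q i \<le> q j / 4" if "i \<le> j" for i
    using term_le[OF that] q[OF that] by linarith
  have "(\<Sum>i\<le>j. f i * (1 - f i) * q i) \<le> (\<Sum>i\<le>j. q j / 4)"
    by (rule sum_mono) (rule term_le_j, simp)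
  then have "q j \<le> (\<Sum>i\<le>j. q j / 4)" using le by linarith
  then have "4 * q j \<le> (1 + real j) * q j" by (simp add: mult.commute)
  then show "3 \<le> j" using q[of j] by (auto simp: mult_le_cancel_right)
  assume "j = 3" "i \<le> 3"
  let ?t = "\<lambda>l. f l * (1 - f l) * q l"
  have "q 3 \<le> ?t 0 + ?t 1 + ?t 2 + ?t 3"
    using le \<open>j = 3\<close> by (simp add: numeral_eq_Suc atMost_Suc)
  moreover have "?t 0 \<le> q 3 / 4" "?t 1 \<le> q 3 / 4" "?t 2 \<le> q 3 / 4" "?t 3 \<le> q 3 / 4"
    using term_le_j \<open>j = 3\<close> by auto
  ultimately have "?t 0 = q 3 / 4 \<and> ?t 1 = q 3 / 4 \<and> ?t 2 = q 3 / 4 \<and> ?t 3 = q 3 / 4"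
    by (intro conjI) linarith+
  then have eq: "?t i = q 3 / 4"
    using \<open>i \<le> 3\<close> less_4_cases[of i] by auto
  then have "q i = q 3" using term_le[of i] q[of i] \<open>j = 3\<close> \<open>i \<le> 3\<close> by simp
  with eq have "(f i * (1 - f i)) * q 3 = (1/4) * q 3" by simp
  then have "f i * (1 - f i) = 1/4" using q[of 3] \<open>j = 3\<close> by (simp only: mult_cancel_right) simp
  then have "(f i - 1/2)^2 = 0" using quarter[of i] by simp
  with \<open>q i = q 3\<close> show "f i = 1/2 \<and> q i = q 3" by simp
qed

text \<open>The eight right-hand sides add up to \<open>32 * D\<close>, so all eight inequalities are equalities,
  and suitable differences of them isolate each \<open>G i l + G l i\<close>.\<close>
lemma cross_terms_zero_if_sign_sums_ge:
  fixes G :: "nat \<Rightarrow> nat \<Rightarrow> real"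
  assumes diag: "\<And>i. i < 4 \<Longrightarrow> G i i = D"
    and signs: "\<And>\<sigma> :: nat \<Rightarrow> int. (\<And>i. \<sigma> i = 1 \<or> \<sigma> i = -1) \<Longrightarrow> \<sigma> 3 = 1 \<Longrightarrow>
      4 * D \<le> (\<Sum>i<4. \<Sum>l<4. of_int (\<sigma> i) * of_int (\<sigma> l) * G i l)"
    and "i < 4" "l < 4" "i \<noteq> l"
  shows "G i l + G l i = 0"
proof -
  define sg :: "nat set \<Rightarrow> nat \<Rightarrow> int" where "sg S i = (if i \<in> S then -1 else 1)" for S i
  have pm: "sg S i = 1 \<or> sg S i = -1" for S i by (simp add: sg_def)
  note s8 = signs[of "sg {}", OF pm] signs[of "sg {0}", OF pm] signs[of "sg {1}", OF pm]
    signs[of "sg {2}", OF pm] signs[of "sg {0, 1}", OF pm] signs[of "sg {0, 2}", OF pm]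
    signs[of "sg {1, 2}", OF pm] signs[of "sg {0, 1, 2}", OF pm]
  have "G 0 1 + G 1 0 = 0 \<and> G 0 2 + G 2 0 = 0 \<and> G 0 3 + G 3 0 = 0 \<and>
      G 1 2 + G 2 1 = 0 \<and> G 1 3 + G 3 1 = 0 \<and> G 2 3 + G 3 2 = 0"
    using s8[unfolded sum_lessThan_4 sg_def, simplified] diag[of 0] diag[of 1] diag[of 2] diag[of 3]
    unfolding One_nat_def by (intro conjI) linarith+
  then show ?thesis
    using less_4_cases[OF \<open>i < 4\<close>] less_4_cases[OF \<open>l < 4\<close>] \<open>i \<noteq> l\<close>
    by (auto simp: add.commute)
qed

locale succ_minima =
  fixes L :: "'v::real_vector set" and Q :: "'v \<Rightarrow> real" and \<beta> :: "'v \<Rightarrow> 'v \<Rightarrow> real"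
    and k :: nat and b v :: "nat \<Rightarrow> 'v"
  assumes lattice: "L = int_combs k b"
    and bilinear: "bilinear \<beta>" and Q_eq: "\<And>x. Q x = \<beta> x x"
    and Q_pos: "\<And>x. x \<in> L \<Longrightarrow> x \<noteq> 0 \<Longrightarrow> 0 < Q x"
    and attains: "attains_succ_min L Q k v"
begin

lemma v_in_L: "i < k \<Longrightarrow> v i \<in> L"
  using attains by (simp add: attains_succ_min_def)

lemma zindep_v: "zindep k v"
  using attains by (simp add: attains_succ_min_def)

lemma is_succ_min_v: "i < k \<Longrightarrow> is_succ_min L Q (Suc i) (Q (v i))"
  using attains by (simp add: attains_succ_min_def)

lemma Q_v_pos: "i < k \<Longrightarrow> 0 < Q (v i)"
  using Q_pos v_in_L zindep_nonzero[OF zindep_v] by blast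

lemma Q_v_mono:
  assumes "i \<le> j" "j < k"
  shows "Q (v i) \<le> Q (v j)"
proof -
  have "zrank_ge {x\<in>L. Q x \<le> Q (v j)} (Suc j)"
    using is_succ_min_v[OF \<open>j < k\<close>] by (simp add: is_succ_min_def)
  then have "zrank_ge {x\<in>L. Q x \<le> Q (v j)} (Suc i)"
    unfolding zrank_ge_def using zindep_mono \<open>i \<le> j\<close> by (meson Suc_le_mono less_le_trans not_le)
  then show ?thesis
    using is_succ_min_v[of i] assms by (simp add: is_succ_min_def)
qed

lemma int_combs_v_subset: "int_combs k v \<subseteq> L"
  using int_combs_subset v_in_L unfolding lattice by blast

lemma int_combs_v_in_L: "(\<Sum>i<k. real_of_int (c i) *\<^sub>R v i) \<in> L"
  using int_combs_v_subset int_combsI by blast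

lemma L_diff: "x \<in> L \<Longrightarrow> y \<in> L \<Longrightarrow> x - y \<in> L"
  unfolding lattice by (rule int_combs_diff)

lemma is_basis_of_iff: "is_basis_of L k v \<longleftrightarrow> L = int_combs k v"
  using v_in_L zindep_v by (auto simp: is_basis_of_def int_combs_def)

text \<open>A vector of \<open>L\<close> whose expansion in \<open>v\<close> ends at \<open>v j\<close> is at least as long as \<open>v j\<close>:
  otherwise, with \<open>m\<close> the first index such that \<open>Q y < Q (v m)\<close>, the vectors
  \<open>v 0, \<dots>, v (m - 1), y\<close> would show that the \<open>(m + 1)\<close>-st minimum is below \<open>Q (v m)\<close>.\<close>
lemma Q_v_le_if_last_coeff:
  assumes "y \<in> L" "d \<noteq> 0" and y: "real_of_int d *\<^sub>R y = (\<Sum>i<k. real_of_int (e i) *\<^sub>R v i)"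
    and "j < k" "e j \<noteq> 0" "\<And>i. j < i \<Longrightarrow> i < k \<Longrightarrow> e i = 0"
  shows "Q (v j) \<le> Q y"
proof (rule ccontr)
  assume "\<not> Q (v j) \<le> Q y"
  define m where "m = (LEAST m. Q y < Q (v m))"
  have less: "Q y < Q (v m)" and "m \<le> j"
    using \<open>\<not> Q (v j) \<le> Q y\<close> LeastI[of "\<lambda>m. Q y < Q (v m)" j] Least_le[of "\<lambda>m. Q y < Q (v m)" j]
    by (auto simp: m_def)
  have "Q (v i) \<le> Q y" if "i < m" for i
    using not_less_Least[of i "\<lambda>m. Q y < Q (v m)"] that by (simp add: m_def)
  then have "zrank_ge {x\<in>L. Q x \<le> Q y} (Suc m)"
    using \<open>y \<in> L\<close> v_in_L \<open>m \<le> j\<close> \<open>j < k\<close>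
    by (intro zrank_geI[of _ "v(m := y)"] zindep_replace[OF zindep_v \<open>m \<le> j\<close> assms(4,2) y assms(5,6)]) auto
  then have "Q (v m) \<le> Q y"
    using is_succ_min_v[of m] \<open>m \<le> j\<close> \<open>j < k\<close> by (simp add: is_succ_min_def)
  with less show False by simp
qed

lemma int_multiple_in_int_combs_v:
  assumes "x \<in> L"
  obtains d n where "0 < d" "real_of_int d *\<^sub>R x = (\<Sum>i<k. real_of_int (n i) *\<^sub>R v i)"
proof -
  have "(v(k := x)) i \<in> int_combs k b" if "i \<le> k" for i
    using that assms v_in_L unfolding lattice by auto
  then obtain c where c: "\<exists>i\<le>k. c i \<noteq> 0" "(\<Sum>i\<le>k. real_of_int (c i) *\<^sub>R (v(k := x)) i) = 0"
    using int_combs_dependent by blast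
  then have rel: "real_of_int (c k) *\<^sub>R x = - (\<Sum>i<k. real_of_int (c i) *\<^sub>R v i)"
    by (simp add: lessThan_Suc_atMost[symmetric] eq_neg_iff_add_eq_0 add.commute)
  have "c k \<noteq> 0"
  proof
    assume "c k = 0"
    then have "\<forall>i<k. c i = 0" using rel zindep_v unfolding zindep_def by simp
    with \<open>c k = 0\<close> c(1) show False by (auto simp: le_less)
  qed
  have "real_of_int \<bar>c k\<bar> *\<^sub>R x = real_of_int (sgn (c k)) *\<^sub>R (real_of_int (c k) *\<^sub>R x)"
    by (simp add: abs_sgn)
  also have "\<dots> = (\<Sum>i<k. real_of_int (- sgn (c k) * c i) *\<^sub>R v i)"
    unfolding rel by (simp add: scaleR_sum_right sum_negf)
  finally have "real_of_int \<bar>c k\<bar> *\<^sub>R x = (\<Sum>i<k. real_of_int (- sgn (c k) * c i) *\<^sub>R v i)" .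
  moreover have "0 < \<bar>c k\<bar>" using \<open>c k \<noteq> 0\<close> by simp
  ultimately show ?thesis by (rule that[rotated])
qed

lemma fractional_point:
  assumes "x \<in> L" "x \<notin> int_combs k v"
  obtains d r y where "0 < d" "\<And>i. 0 \<le> r i \<and> r i < d" "\<exists>i<k. r i \<noteq> 0"
    "y \<in> L" "real_of_int d *\<^sub>R y = (\<Sum>i<k. real_of_int (r i) *\<^sub>R v i)"
proof -
  obtain d n where "0 < d" and dx: "real_of_int d *\<^sub>R x = (\<Sum>i<k. real_of_int (n i) *\<^sub>R v i)"
    using int_multiple_in_int_combs_v[OF \<open>x \<in> L\<close>] by blast
  define z where "z = (\<Sum>i<k. real_of_int (n i div d) *\<^sub>R v i)"
  have "z \<in> L" unfolding z_def by (rule int_combs_v_in_L)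
  have "real_of_int d *\<^sub>R (x - z) = (\<Sum>i<k. real_of_int (n i - d * (n i div d)) *\<^sub>R v i)"
    by (simp add: z_def dx scaleR_diff_right scaleR_sum_right sum_subtractf scaleR_diff_left)
  also have "\<dots> = (\<Sum>i<k. real_of_int (n i mod d) *\<^sub>R v i)"
    by (simp only: minus_mult_div_eq_mod)
  finally have dy: "real_of_int d *\<^sub>R (x - z) = \<dots>" .
  have "\<exists>i<k. n i mod d \<noteq> 0"
  proof (rule ccontr)
    assume "\<not> ?thesis"
    then have "x = z" using dy \<open>0 < d\<close> by simp
    then show False using \<open>x \<notin> int_combs k v\<close> by (simp add: z_def int_combsI)
  qed
  then show ?thesis
    using that[OF \<open>0 < d\<close> _ _ L_diff[OF \<open>x \<in> L\<close> \<open>z \<in> L\<close>] dy] \<open>0 < d\<close> by simp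
qed

lemma Q_v_le_rounding_bound:
  assumes "0 < d" and r: "\<And>i. 0 \<le> r i \<and> r i < d" and "j < k" "r j \<noteq> 0"
    and r_zero: "\<And>i. j < i \<Longrightarrow> i < k \<Longrightarrow> r i = 0"
    and "y \<in> L" and y: "real_of_int d *\<^sub>R y = (\<Sum>i<k. real_of_int (r i) *\<^sub>R v i)"
  shows "Q (v j) \<le> (\<Sum>i\<le>j. r i / d * (1 - r i / d) * Q (v i))"
proof -
  define f where "f i = real_of_int (r i) / real_of_int d" for i
  have "0 \<le> f i \<and> f i \<le> 1" for i using r[of i] \<open>0 < d\<close> by (simp add: f_def)
  then obtain s where s: "\<forall>i. f i = 0 \<longrightarrow> \<not> s i"
    and rounded: "Q (\<Sum>i<k. (f i - of_bool (s i)) *\<^sub>R v i) \<le> (\<Sum>i<k. f i * (1 - f i) * Q (v i))"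
    using bilinear_rounding_le[OF bilinear] unfolding Q_eq by blast
  define e where "e i = r i - d * of_bool (s i)" for i
  define z where "z = (\<Sum>i<k. real_of_int (of_bool (s i)) *\<^sub>R v i)"
  have "z \<in> L" unfolding z_def by (rule int_combs_v_in_L)
  have "y = (1 / real_of_int d) *\<^sub>R (real_of_int d *\<^sub>R y)" using \<open>0 < d\<close> by simp
  also have "\<dots> = (\<Sum>i<k. f i *\<^sub>R v i)" by (simp add: y f_def scaleR_sum_right)
  finally have "y = (\<Sum>i<k. f i *\<^sub>R v i)" .
  then have y_z: "y - z = (\<Sum>i<k. (f i - of_bool (s i)) *\<^sub>R v i)"
    by (simp add: z_def sum_subtractf scaleR_diff_left)
  have dyz: "real_of_int d *\<^sub>R (y - z) = (\<Sum>i<k. real_of_int (e i) *\<^sub>R v i)"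
    using \<open>0 < d\<close> unfolding y_z scaleR_sum_right
    by (intro sum.cong refl) (simp add: e_def f_def algebra_simps)
  have "e j \<noteq> 0" using r[of j] \<open>r j \<noteq> 0\<close> by (auto simp: e_def)
  moreover have "e i = 0" if "j < i" "i < k" for i
    using r_zero[OF that] s by (simp add: e_def f_def)
  ultimately have "Q (v j) \<le> Q (y - z)"
    using Q_v_le_if_last_coeff[OF L_diff[OF \<open>y \<in> L\<close> \<open>z \<in> L\<close>] _ dyz \<open>j < k\<close>] \<open>0 < d\<close> by simp
  also have "\<dots> \<le> (\<Sum>i<k. f i * (1 - f i) * Q (v i))" using rounded y_z by simp
  also have "\<dots> = (\<Sum>i\<le>j. f i * (1 - f i) * Q (v i))"
    using r_zero \<open>j < k\<close> by (intro sum.mono_neutral_cong_right) (auto simp: f_def)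
  finally show ?thesis by (simp add: f_def)
qed

lemma half_sum_in_L_if_not_int_combs_v:
  assumes "k \<le> 4" "x \<in> L" "x \<notin> int_combs k v"
  shows "k = 4 \<and> (\<Sum>i<4. (1/2) *\<^sub>R v i) \<in> L \<and> (\<forall>i<4. Q (v i) = Q (v 3))"
proof -
  obtain d r y where "0 < d" and r: "\<And>i. 0 \<le> r i \<and> r i < d" and "\<exists>i<k. r i \<noteq> 0"
    and "y \<in> L" and y: "real_of_int d *\<^sub>R y = (\<Sum>i<k. real_of_int (r i) *\<^sub>R v i)"
    using fractional_point[OF assms(2,3)] by blast
  define J where "J = {i. i < k \<and> r i \<noteq> 0}"
  define j where "j = Max J"
  have "finite J" "J \<noteq> {}" using \<open>\<exists>i<k. r i \<noteq> 0\<close> by (auto simp: J_def)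
  then have "j \<in> J" and below_j: "\<And>i. i \<in> J \<Longrightarrow> i \<le> j" unfolding j_def by auto
  then have "j < k" "r j \<noteq> 0" by (auto simp: J_def)
  have r_zero: "r i = 0" if "j < i" "i < k" for i
    using below_j[of i] that by (auto simp: J_def)
  have bound: "Q (v j) \<le> (\<Sum>i\<le>j. r i / d * (1 - r i / d) * Q (v i))"
    using Q_v_le_rounding_bound[OF \<open>0 < d\<close> r \<open>j < k\<close> \<open>r j \<noteq> 0\<close> r_zero \<open>y \<in> L\<close> y] .
  have Q_v: "\<forall>i\<le>j. 0 < Q (v i) \<and> Q (v i) \<le> Q (v j)"
    using Q_v_pos Q_v_mono \<open>j < k\<close> by simp
  note quarter = le_sum_quarter_weights[where f = "\<lambda>i. r i / d" and q = "\<lambda>i. Q (v i)", OF Q_v bound]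
  have "j = 3" "k = 4" using quarter(1) \<open>j < k\<close> \<open>k \<le> 4\<close> by linarith+
  have half: "r i / d = 1/2 \<and> Q (v i) = Q (v 3)" if "i < 4" for i
    using quarter(2)[OF \<open>j = 3\<close>, of i] that by simp
  have "real_of_int d *\<^sub>R y = real_of_int d *\<^sub>R (\<Sum>i<4. (1/2) *\<^sub>R v i)"
    unfolding y \<open>k = 4\<close> scaleR_sum_right
  proof (intro sum.cong refl)
    fix i :: nat assume "i \<in> {..<4}"
    then have "real_of_int (r i) = real_of_int d * (1/2)"
      using half[of i] \<open>0 < d\<close> by (simp add: divide_eq_eq)
    then show "real_of_int (r i) *\<^sub>R v i = real_of_int d *\<^sub>R (1/2) *\<^sub>R v i" by simp
  qed
  then have "y = (\<Sum>i<4. (1/2) *\<^sub>R v i)" using \<open>0 < d\<close> by simp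
  with \<open>y \<in> L\<close> \<open>k = 4\<close> half show ?thesis by blast
qed

lemma Q_sum: "Q (\<Sum>i<n. c i *\<^sub>R v i) = (\<Sum>i<n. \<Sum>l<n. c i * c l * \<beta> (v i) (v l))"
  unfolding Q_eq
  by (simp add: bilinear_sum[OF bilinear] sum.cartesian_product[symmetric]
      bilinear_lmul[OF bilinear] bilinear_rmul[OF bilinear] algebra_simps)

text \<open>Subtracting any subset of \<open>{v 0, v 1, v 2}\<close> from \<open>(v 0 + v 1 + v 2 + v 3) / 2\<close> gives a vector
  of \<open>L\<close> to which \<open>Q_v_le_if_last_coeff\<close> applies with \<open>j = 3\<close>; these eight lower bounds force orthogonality.\<close>
lemma half_sum_imp_orthogonal:
  assumes "k = 4" and half: "(\<Sum>i<4. (1/2) *\<^sub>R v i) \<in> L" and Q_v: "\<And>i. i < 4 \<Longrightarrow> Q (v i) = Q (v 3)"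
    and "i < 4" "l < 4" "i \<noteq> l"
  shows "\<beta> (v i) (v l) + \<beta> (v l) (v i) = 0"
proof (rule cross_terms_zero_if_sign_sums_ge[where D = "Q (v 3)"])
  show "\<beta> (v i) (v i) = Q (v 3)" if "i < 4" for i using Q_v[OF that] by (simp add: Q_eq)
  fix \<sigma> :: "nat \<Rightarrow> int" assume \<sigma>: "\<And>i. \<sigma> i = 1 \<or> \<sigma> i = -1" and "\<sigma> 3 = 1"
  define y where "y = (\<Sum>i<4. (1/2) *\<^sub>R v i) - (\<Sum>i<4. real_of_int (of_bool (\<sigma> i = -1)) *\<^sub>R v i)"
  have "y \<in> L"
    using L_diff[OF half int_combs_v_in_L[of "\<lambda>i. of_bool (\<sigma> i = -1)"]] \<open>k = 4\<close> by (simp add: y_def)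
  have y_\<sigma>: "y = (\<Sum>i<4. (real_of_int (\<sigma> i) / 2) *\<^sub>R v i)"
    unfolding y_def sum_subtractf[symmetric] scaleR_diff_left[symmetric]
    by (intro sum.cong refl) (use \<sigma> in force)
  then have two_y: "real_of_int 2 *\<^sub>R y = (\<Sum>i<k. real_of_int (\<sigma> i) *\<^sub>R v i)"
    using \<open>k = 4\<close> by (simp add: scaleR_sum_right)
  have "Q (v 3) \<le> Q y"
    using Q_v_le_if_last_coeff[OF \<open>y \<in> L\<close> _ two_y, where j = 3] \<open>\<sigma> 3 = 1\<close> \<open>k = 4\<close> by simp
  also have "\<dots> = (\<Sum>i<4. \<Sum>l<4. real_of_int (\<sigma> i) * real_of_int (\<sigma> l) * \<beta> (v i) (v l)) / 4"
    unfolding y_\<sigma> Q_sum by (simp add: sum_divide_distrib)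
  finally show "4 * Q (v 3) \<le> (\<Sum>i<4. \<Sum>l<4. real_of_int (\<sigma> i) * real_of_int (\<sigma> l) * \<beta> (v i) (v l))"
    by simp
qed (use assms in auto)

lemma L_eq_int_combs_v_or_orthogonal:
  assumes "k \<le> 4"
  shows "L = int_combs k v \<or> (k = 4 \<and> (\<forall>i<4. Q (v i) = Q (v 3))
    \<and> (\<forall>i<4. \<forall>l<4. i \<noteq> l \<longrightarrow> \<beta> (v i) (v l) + \<beta> (v l) (v i) = 0))"
proof (cases "L = int_combs k v")
  case False
  then obtain x where "x \<in> L" "x \<notin> int_combs k v" using int_combs_v_subset by blast
  then have "k = 4" "(\<Sum>i<4. (1/2) *\<^sub>R v i) \<in> L" "\<forall>i<4. Q (v i) = Q (v 3)"
    using half_sum_in_L_if_not_int_combs_v[OF assms] by auto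
  moreover have "\<forall>i<4. \<forall>l<4. i \<noteq> l \<longrightarrow> \<beta> (v i) (v l) + \<beta> (v l) (v i) = 0"
    using half_sum_imp_orthogonal[OF calculation(1,2)] calculation(3) by blast
  ultimately show ?thesis by blast
qed simp

end

section \<open>Orders in the definite quaternion algebra ramified at an odd prime\<close>

lemma square_mod_8_cases:
  fixes x :: int
  shows "(even x \<and> (x^2 mod 8 = 0 \<or> x^2 mod 8 = 4)) \<or> (odd x \<and> x^2 mod 8 = 1)"
proof -
  have square: "x^2 mod 8 = (x mod 8)^2 mod 8" by (simp add: power_mod)
  have parity: "even x \<longleftrightarrow> even (x mod 8)" by (metis dvd_mod_iff even_numeral)
  have "x mod 8 \<in> {0, 1, 2, 3, 4, 5, 6, 7}" by auto
  then show ?thesis unfolding square parity by (auto simp: power2_eq_square)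
qed

lemma even_if_8_dvd_sum_four_squares:
  fixes y :: "nat \<Rightarrow> int"
  assumes "8 dvd (\<Sum>i<4. (y i)^2)" "i < 4"
  shows "even (y i)"
proof -
  have residues: "r0 \<noteq> 1 \<and> r1 \<noteq> 1 \<and> r2 \<noteq> 1 \<and> r3 \<noteq> 1"
    if "r0 \<in> {0, 1, 4}" "r1 \<in> {0, 1, 4}" "r2 \<in> {0, 1, 4}" "r3 \<in> {0, 1, 4}"
      and "(r0 + r1 + r2 + r3) mod 8 = 0" for r0 r1 r2 r3 :: int
    using that by auto
  define r where "r l = (y l)^2 mod 8" for l
  have r: "r l \<in> {0, 1, 4}" and odd_iff: "odd (y l) \<longleftrightarrow> r l = 1" for l
    using square_mod_8_cases[of "y l"] by (auto simp: r_def)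
  have "(r 0 + r 1 + r 2 + r 3) mod 8 = 0"
    using assms(1) mod_sum_eq[of "\<lambda>i. (y i)^2" 8 "{..<4}"] by (simp add: r_def sum_lessThan_4)
  then have "r 0 \<noteq> 1 \<and> r 1 \<noteq> 1 \<and> r 2 \<noteq> 1 \<and> r 3 \<noteq> 1" by (rule residues[OF r r r r])
  then show ?thesis using odd_iff[of i] less_4_cases[OF assms(2)] by auto
qed

lemma pow2_dvd_if_pow2_dvd_sum_four_squares:
  fixes y :: "nat \<Rightarrow> int"
  assumes "2^(2*m+3) dvd (\<Sum>i<4. (y i)^2)" "i < 4"
  shows "2^(m+1) dvd y i"
  using assms
proof (induction m arbitrary: y)
  case 0
  then show ?case using even_if_8_dvd_sum_four_squares[of y i] by simp
next
  case (Suc m)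
  have "8 dvd (\<Sum>i<4. (y i)^2)"
    using Suc.prems(1) by (rule dvd_trans[rotated]) (simp add: power_add)
  then have "\<forall>i<4. even (y i)" using even_if_8_dvd_sum_four_squares by blast
  define z where "z i = y i div 2" for i
  have z: "y i = 2 * z i" if "i < 4" for i
    using \<open>\<forall>i<4. even (y i)\<close> that by (simp add: z_def)
  have "(\<Sum>i<4. (y i)^2) = 4 * (\<Sum>i<4. (z i)^2)"
    by (simp add: z power_mult_distrib sum_distrib_left)
  moreover have "(2::int)^(2 * Suc m + 3) = 4 * 2^(2*m+3)"
    using power_add[of "2::int" 2 "2 * m + 3"] by simp
  ultimately have "4 * 2^(2*m+3) dvd 4 * (\<Sum>i<4. (z i)^2)"
    using Suc.prems(1) by simp
  then have "2^(2*m+3) dvd (\<Sum>i<4. (z i)^2)"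
    by (subst (asm) dvd_times_left_cancel_iff) simp_all
  then have "2^(m+1) dvd z i" using Suc.IH Suc.prems(2) by blast
  then have "2 * 2^(m+1) dvd 2 * z i" by (rule mult_dvd_mono[OF dvd_refl])
  then show ?case using z[OF Suc.prems(2)] by simp
qed

text \<open>The descent makes every \<open>Y i\<close> divisible by \<open>2^(E + 1)\<close>; hence so is \<open>E * z n\<close> and, as
  \<open>z n\<close> is odd, \<open>E\<close> itself, although \<open>0 < E < 2^(E + 1)\<close>.\<close>
lemma no_odd_vector_with_deep_norm:
  fixes E N :: int and Y :: "nat \<Rightarrow> int" and W :: "nat \<Rightarrow> 'n \<Rightarrow> int" and z :: "'n \<Rightarrow> int"
  assumes "0 < E" "2^(2 * nat E + 3) dvd N" "E * N = (\<Sum>i<4. (Y i)^2)"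
    and z: "\<And>n. E * z n = (\<Sum>i<4. Y i * W i n)" and "odd (z n)"
  shows False
proof -
  define m where "m = nat E"
  have "2^(2*m+3) dvd E * N" using assms(2) unfolding m_def by (rule dvd_mult)
  then have "2^(m+1) dvd Y i" if "i < 4" for i
    using pow2_dvd_if_pow2_dvd_sum_four_squares[OF _ that] assms(3) by simp
  then have "2^(m+1) dvd E * z n" unfolding z by (intro dvd_sum dvd_mult2) auto
  moreover have "coprime (2^(m+1)) (z n)" using \<open>odd (z n)\<close> by simp
  ultimately have "2^(m+1) dvd E" using coprime_dvd_mult_left_iff by blast
  then have "2^(m+1) \<le> E" using \<open>0 < E\<close> by (rule zdvd_imp_le)
  moreover have "m < (2::nat)^m" "(2::nat)^m < 2^(m+1)" by (rule less_exp) simp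
  then have "int m < int (2^(m+1))" by (simp only: of_nat_less_iff)
  then have "E < 2^(m+1)" using \<open>0 < E\<close> by (simp add: m_def)
  ultimately show False by simp
qed

lemma Rats_common_denominator:
  fixes F :: "real set"
  shows "finite F \<Longrightarrow> F \<subseteq> \<rat> \<Longrightarrow> \<exists>M::int. 0 < M \<and> (\<forall>x\<in>F. of_int M * x \<in> \<int>)"
proof (induction F rule: finite_induct)
  case empty
  show ?case by (intro exI[of _ 1]) simp
next
  case (insert x F)
  then obtain M where M: "0 < M" "\<forall>y\<in>F. of_int M * y \<in> \<int>" by auto
  from insert.prems obtain p q where "0 < q" "x = of_int p / of_int q"
    by (auto elim!: Rats_cases')
  then have x: "of_int (M * q) * x = (of_int (M * p) :: real)" by simp
  have "of_int (M * q) * x \<in> \<int>" unfolding x by (rule Ints_of_int)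
  moreover have "of_int (M * q) * y \<in> \<int>" if "y \<in> F" for y
    using Ints_mult[OF Ints_of_int[of q] bspec[OF M(2) that]] by (simp add: mult_ac)
  ultimately show ?case using M(1) \<open>0 < q\<close> by (intro exI[of _ "M * q"]) auto
qed

definition bnrd :: "int \<Rightarrow> int \<Rightarrow> real^4 \<Rightarrow> real^4 \<Rightarrow> real" where
  "bnrd a b x y = x$1 * y$1 - a * x$2 * y$2 - b * x$3 * y$3 + a * b * x$4 * y$4"

lemma bnrd_self: "bnrd a b x x = nrd a b x"
  by (simp add: bnrd_def nrd_def power2_eq_square algebra_simps)

lemma bnrd_commute: "bnrd a b x y = bnrd a b y x"
  by (simp add: bnrd_def algebra_simps)

lemma bilinear_bnrd: "bilinear (bnrd a b)"
  unfolding bilinear_def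
  by (auto intro!: linearI simp: bnrd_def algebra_simps)

lemma nrd_pos:
  assumes "a < 0" "b < 0" "x \<noteq> 0"
  shows "0 < nrd a b x"
proof -
  obtain n where "x $ n \<noteq> 0" using \<open>x \<noteq> 0\<close> by (auto simp: vec_eq_iff)
  have coef: "0 < real_of_int (- a)" "0 < real_of_int (- b)" "0 < real_of_int (a * b)"
    using assms by (simp_all add: mult_neg_neg)
  have nrd: "nrd a b x = (x$1)^2 + real_of_int (- a) * (x$2)^2 + real_of_int (- b) * (x$3)^2
      + real_of_int (a * b) * (x$4)^2"
    by (simp add: nrd_def)
  have "0 \<le> real_of_int (- a) * (x$2)^2" "0 \<le> real_of_int (- b) * (x$3)^2"
    "0 \<le> real_of_int (a * b) * (x$4)^2"
    by (rule mult_nonneg_nonneg[OF less_imp_le[OF coef(1)] zero_le_power2]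
        mult_nonneg_nonneg[OF less_imp_le[OF coef(2)] zero_le_power2]
        mult_nonneg_nonneg[OF less_imp_le[OF coef(3)] zero_le_power2])+
  moreover have "0 < (x$1)^2 \<or> 0 < real_of_int (- a) * (x$2)^2 \<or> 0 < real_of_int (- b) * (x$3)^2
      \<or> 0 < real_of_int (a * b) * (x$4)^2"
    using \<open>x $ n \<noteq> 0\<close> exhaust_4[of n] coef by (auto simp: zero_less_mult_iff mult_less_0_iff)
  ultimately show ?thesis unfolding nrd using zero_le_power2[of "x$1"] by linarith
qed

lemma orthogonal_expansion_4:
  fixes \<beta> :: "real^4 \<Rightarrow> real^4 \<Rightarrow> real" and w :: "nat \<Rightarrow> real^4"
  assumes bil: "bilinear \<beta>" and "D \<noteq> 0"
    and orth: "\<And>i l. i < 4 \<Longrightarrow> l < 4 \<Longrightarrow> \<beta> (w i) (w l) = (if i = l then D else 0)"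
  shows "D *\<^sub>R q = (\<Sum>i<4. \<beta> q (w i) *\<^sub>R w i)"
proof -
  define \<phi> where "\<phi> t = t$1 *\<^sub>R w 0 + t$2 *\<^sub>R w 1 + t$3 *\<^sub>R w 2 + t$4 *\<^sub>R w 3" for t :: "real^4"
  have "linear \<phi>"
    by (rule linearI) (simp_all add: \<phi>_def algebra_simps scaleR_add_right)
  have coeff: "\<beta> (\<phi> t) (w 0) = t$1 * D" "\<beta> (\<phi> t) (w 1) = t$2 * D"
    "\<beta> (\<phi> t) (w 2) = t$3 * D" "\<beta> (\<phi> t) (w 3) = t$4 * D" for t
    by (simp_all add: \<phi>_def bilinear_ladd[OF bil] bilinear_lmul[OF bil] orth)
  have "inj \<phi>"
  proof (rule injI)
    fix s t assume "\<phi> s = \<phi> t"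
    then have "s$n * D = t$n * D" if "n \<in> {1, 2, 3, 4}" for n
      using coeff[of s] coeff[of t] that by auto
    then show "s = t" using \<open>D \<noteq> 0\<close> by (auto simp: vec_eq_iff forall_4)
  qed
  then obtain t where t: "q = \<phi> t"
    using linear_injective_imp_surjective[OF \<open>linear \<phi>\<close>] by (metis surjD)
  show ?thesis
    unfolding t sum_lessThan_4 coeff by (simp add: \<phi>_def algebra_simps scaleR_add_right)
qed

lemma rat_vectors_common_denominator:
  fixes w :: "nat \<Rightarrow> real^'n"
  assumes "\<forall>i<k. \<forall>n. w i $ n \<in> \<rat>"
  shows "\<exists>M::int. \<exists>W. 0 < M \<and> (\<forall>i<k. \<forall>n. of_int M * w i $ n = of_int (W i n))"
proof -
  define F where "F = (\<lambda>(i, n). w i $ n) ` ({..<k} \<times> UNIV)"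
  have "finite F" "F \<subseteq> \<rat>" using assms by (auto simp: F_def)
  then obtain M :: int where "0 < M" and M: "\<forall>x\<in>F. of_int M * x \<in> \<int>"
    using Rats_common_denominator by blast
  have "of_int M * w i $ n = of_int \<lfloor>of_int M * w i $ n\<rfloor>" if "i < k" for i n
  proof -
    have "w i $ n \<in> F" unfolding F_def using that by (intro image_eqI[where x = "(i, n)"]) auto
    with M show ?thesis by (auto elim!: Ints_cases)
  qed
  with \<open>0 < M\<close> show ?thesis
    by (intro exI[of _ M] exI[of _ "\<lambda>i n. \<lfloor>of_int M * w i $ n\<rfloor>"]) simp
qed

text \<open>Clearing denominators, the coordinates \<open>Y i\<close> of an integral vector \<open>q\<close> in the frame \<open>w\<close>
  are integers with \<open>E * nrd a b q = (\<Sum>i<4. (Y i)^2)\<close>; splitting at \<open>2\<close> provides \<open>q\<close> with an odd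
  coordinate and \<open>nrd a b q\<close> divisible by a large power of \<open>2\<close>.\<close>
lemma no_rational_orthogonal_frame:
  fixes a b :: int and w :: "nat \<Rightarrow> real^4"
  assumes "a < 0" "b < 0" "splits_at a b 2"
    and rat: "\<forall>i<4. \<forall>n. w i $ n \<in> \<rat>" and "w 3 \<noteq> 0"
    and orth: "\<And>i l. i < 4 \<Longrightarrow> l < 4 \<Longrightarrow> bnrd a b (w i) (w l) = (if i = l then nrd a b (w 3) else 0)"
  shows False
proof -
  define D where "D = nrd a b (w 3)"
  have "0 < D" unfolding D_def by (rule nrd_pos[OF assms(1,2,5)])
  obtain M :: int and W where "0 < M" and W_M: "\<forall>i<4. \<forall>n. of_int M * w i $ n = of_int (W i n)"
    using rat_vectors_common_denominator[OF rat] by (elim exE conjE)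
  then have W: "of_int M * w i $ n = of_int (W i n)" if "i < 4" for i n using that by blast
  define E where "E = (W 3 1)^2 - a * (W 3 2)^2 - b * (W 3 3)^2 + a * b * (W 3 4)^2"
  have W': "real_of_int (W i n) = of_int M * w i $ n" if "i < 4" for i n using W[OF that] by simp
  note W3 = W'[of 3, simplified]
  have E: "real_of_int E = of_int M ^ 2 * D"
    unfolding E_def D_def nrd_def of_int_add of_int_diff of_int_mult of_int_power W3
    by (simp add: power_mult_distrib algebra_simps)
  have "0 < real_of_int E" unfolding E using \<open>0 < M\<close> \<open>0 < D\<close> by simp
  then have "0 < E" by simp
  obtain x y z :: int where prim: "\<not> (2 dvd x \<and> 2 dvd y \<and> 2 dvd z)"
    and cong: "[a * x^2 + b * y^2 = z^2] (mod 2^(2 * nat E + 3))"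
    using \<open>splits_at a b 2\<close> unfolding splits_at_def by blast
  define N where "N = z^2 - (a * x^2 + b * y^2)"
  have "2^(2 * nat E + 3) dvd N"
    unfolding N_def cong_iff_dvd_diff[symmetric] by (rule cong_sym[OF cong])
  define zq :: "4 \<Rightarrow> int" where "zq n = (if n = 1 then z else if n = 2 then x else if n = 3 then y else 0)" for n
  define q :: "real^4" where "q = (\<chi> n. of_int (zq n))"
  have q: "q$1 = z" "q$2 = x" "q$3 = y" "q$4 = 0" by (simp_all add: q_def zq_def)
  define Y where "Y i = z * W i 1 - a * x * W i 2 - b * y * W i 3" for i
  have Y: "real_of_int (Y i) = of_int M * bnrd a b q (w i)" if "i < 4" for i
    unfolding Y_def of_int_diff of_int_mult W'[OF that] bnrd_def q by (simp add: algebra_simps)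
  have expansion: "D *\<^sub>R q = (\<Sum>i<4. bnrd a b q (w i) *\<^sub>R w i)"
    using \<open>0 < D\<close> orth by (intro orthogonal_expansion_4[OF bilinear_bnrd]) (auto simp: D_def)
  have lin: "linear (bnrd a b q)" using bilinear_bnrd by (simp add: bilinear_def)
  have "D * nrd a b q = bnrd a b q (D *\<^sub>R q)"
    by (simp add: linear_cmul[OF lin] bnrd_self)
  also have "\<dots> = (\<Sum>i<4. (bnrd a b q (w i))^2)"
    unfolding expansion by (simp add: linear_sum[OF lin] linear_cmul[OF lin] power2_eq_square)
  finally have D_nrd: "D * nrd a b q = (\<Sum>i<4. (bnrd a b q (w i))^2)" .
  have "real_of_int N = nrd a b q" by (simp add: N_def nrd_def q)
  then have "real_of_int (E * N) = of_int M ^ 2 * (D * nrd a b q)" by (simp add: E)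
  also have "\<dots> = (\<Sum>i<4. (of_int M * bnrd a b q (w i))^2)"
    unfolding D_nrd by (simp add: sum_distrib_left power_mult_distrib)
  also have "\<dots> = real_of_int (\<Sum>i<4. (Y i)^2)" by (simp add: Y)
  finally have norm: "E * N = (\<Sum>i<4. (Y i)^2)" by (simp only: of_int_eq_iff)
  have coord: "E * zq n = (\<Sum>i<4. Y i * W i n)" for n
  proof -
    have D_q: "D * q $ n = (\<Sum>i<4. bnrd a b q (w i) * w i $ n)"
      using arg_cong[OF expansion, of "\<lambda>u. u $ n"] by (simp add: sum_component)
    have "real_of_int (E * zq n) = of_int M ^ 2 * (D * q $ n)" by (simp add: E q_def)
    also have "\<dots> = (\<Sum>i<4. (of_int M * bnrd a b q (w i)) * (of_int M * w i $ n))"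
      unfolding D_q by (simp add: sum_distrib_left power2_eq_square mult_ac)
    also have "\<dots> = (\<Sum>i<4. real_of_int (Y i) * real_of_int (W i n))"
      by (intro sum.cong refl) (simp add: Y W)
    finally have "real_of_int (E * zq n) = real_of_int (\<Sum>i<4. Y i * W i n)" by simp
    then show ?thesis by (simp only: of_int_eq_iff)
  qed
  have "odd (zq 1) \<or> odd (zq 2) \<or> odd (zq 3)" using prim by (auto simp: zq_def)
  then obtain n where "odd (zq n)" by blast
  then show False
    by (rule no_odd_vector_with_deep_norm[where z = zq, OF \<open>0 < E\<close> \<open>2^(2 * nat E + 3) dvd N\<close> norm coord])
qed

lemma attains_succ_min_is_basis_of:
  fixes L :: "'v::real_vector set"
  assumes "k \<le> 3" "lattice_rank L k" "pos_def_qf L Q" "attains_succ_min L Q k v"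
  shows "is_basis_of L k v"
proof -
  obtain b where "L = int_combs k b"
    using \<open>lattice_rank L k\<close> by (auto simp: lattice_rank_def int_combs_def)
  moreover obtain \<beta> where "bilinear \<beta>" "\<And>x. Q x = \<beta> x x" "\<forall>x\<in>span L. x \<noteq> 0 \<longrightarrow> 0 < Q x"
    using \<open>pos_def_qf L Q\<close> by (auto simp: pos_def_qf_def)
  ultimately interpret succ_minima L Q \<beta> k b v
    using \<open>attains_succ_min L Q k v\<close> by unfold_locales (auto intro: span_base)
  show ?thesis
    using L_eq_int_combs_v_or_orthogonal \<open>k \<le> 3\<close> is_basis_of_iff by auto
qed

lemma attains_succ_min_is_basis_of_order:
  assumes "prime p" "odd p" "ramified_exactly_at a b p" "is_order a b R"
    and "attains_succ_min R (nrd a b) 4 v"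
  shows "is_basis_of R 4 v"
proof -
  have "a < 0" "b < 0" using \<open>ramified_exactly_at a b p\<close> by (auto simp: ramified_exactly_at_def)
  have "(2::int) \<noteq> p" using \<open>odd p\<close> by auto
  then have "splits_at a b 2"
    using \<open>ramified_exactly_at a b p\<close> two_is_prime unfolding ramified_exactly_at_def by blast
  obtain bb where "R = int_combs 4 bb"
    using \<open>is_order a b R\<close> by (auto simp: is_order_def lattice_rank_def int_combs_def)
  then interpret succ_minima R "nrd a b" "bnrd a b" 4 bb v
    using \<open>attains_succ_min R (nrd a b) 4 v\<close> nrd_pos[OF \<open>a < 0\<close> \<open>b < 0\<close>]
    by unfold_locales (auto simp: bilinear_bnrd bnrd_self)
  have "R = int_combs 4 v"
  proof (rule ccontr)
    assume "R \<noteq> int_combs 4 v"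
    with L_eq_int_combs_v_or_orthogonal[OF order_refl]
    have eq: "\<forall>i<4. nrd a b (v i) = nrd a b (v 3)"
      and orth: "\<forall>i<4. \<forall>l<4. i \<noteq> l \<longrightarrow> bnrd a b (v i) (v l) + bnrd a b (v l) (v i) = 0"
      by blast+
    show False
    proof (rule no_rational_orthogonal_frame[OF \<open>a < 0\<close> \<open>b < 0\<close> \<open>splits_at a b 2\<close>])
      have "\<forall>x\<in>R. \<forall>n. x $ n \<in> \<rat>" using \<open>is_order a b R\<close> by (simp add: is_order_def)
      then show "\<forall>i<4. \<forall>n. v i $ n \<in> \<rat>" using v_in_L by blast
      show "v 3 \<noteq> 0" using zindep_nonzero[OF zindep_v] by simp
      show "bnrd a b (v i) (v l) = (if i = l then nrd a b (v 3) else 0)" if "i < 4" "l < 4" for i l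
      proof (cases "i = l")
        case True
        have "nrd a b (v i) = nrd a b (v 3)" using eq \<open>i < 4\<close> by blast
        with True show ?thesis by (simp add: bnrd_self)
      next
        case False
        then have "bnrd a b (v i) (v l) + bnrd a b (v l) (v i) = 0" using orth that by blast
        then have "bnrd a b (v i) (v l) + bnrd a b (v i) (v l) = 0" by (simp add: bnrd_commute)
        with False show ?thesis by simp
      qed
    qed
  qed
  then show ?thesis using is_basis_of_iff by simp
qed

theorem lemma3p4:
  shows "(\<forall>(L::'v::real_vector set) Q k v.
            k \<le> 3 \<and> lattice_rank L k \<and> pos_def_qf L Q \<and> attains_succ_min L Q k v
            \<longrightarrow> is_basis_of L k v)
       \<and> (\<forall>(p::int) (a::int) (b::int) (R::(real^4) set) v.
            prime p \<and> odd p \<and> ramified_exactly_at a b p \<and> is_order a b R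
            \<and> attains_succ_min R (nrd a b) 4 v
            \<longrightarrow> is_basis_of R 4 v)"
  using attains_succ_min_is_basis_of attains_succ_min_is_basis_of_order by blast

end
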